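(* Consider the ARCH($p$) model $\xi_t=(b_0^2+b_1^2\xi_{t-1}^2+\dots+b_p^2\xi_{t-p}^2)^{1/2}e_t$ with $b_0>0$ and $b_i>0$ for $i=1,\dots,p$, satisfying Assumptions A.1 and A.2. Let $B_t$ be the $p\times p$ random matrix with first row $(b_1^2e_t^2,b_2^2e_t^2,\dots,b_p^2e_t^2)$, ones on the subdiagonal ($(B_t)_{i+1,i}=1$, $i=1,\dots,p-1$) and zeros elsewhere; let $M_t=B_t\cdots B_1$ and $\gamma=\lim_{t\to\infty}\frac1tE(\log\|M_t\|)$ (for any matrix norm). Let $\rho$ be the quantity defined below for this model. Then $2\log\rho=\gamma$.
   Context: For this model the homogeneous part is $a^*\equiv0$, $b^*(x)=(b_1^2x_1^2+\dots+b_p^2x_p^2)^{1/2}$. A.1: $e_t$ i.i.d. with Lebesgue density $f$ locally bounded away from $0$. A.2: $\sup_u(1+|u|)f(u)<\infty$ and $E|e_1|^{r_0}<\infty$ for some $r_0>0$. $\|\cdot\|$ Euclidean on $\mathbb{R}^p$, $\Theta=\{\theta:\|\theta\|=1\}$. $z(x,u)=b^*(x)u$, $w(x,u)=\|(z(x,u),x_1,\dots,x_{p-1})\|$; the collapsed chain on $\Theta$ is $\theta_t^*=(z(\theta^*_{t-1},e_t),\theta^*_{t-1,1},\dots,\theta^*_{t-1,p-1})/w(\theta^*_{t-1},e_t)$, with stationary distribution $\Pi$, and $\rho=\exp\big(\int_\Theta\int_{\mathbb{R}}\log w(\theta,u)f(u)\,du\,\Pi(d\theta)\big)$. *)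

theory Defs
  imports "HOL-Probability.Probability"
begin

text \<open>Conventions: vectors in R^p are functions nat => real, component i (0-based)
 standing for the paper's component i+1; as elements of the product space
 PiM {..<p} (%_. lborel) they are extensional (undefined outside {..<p}).
 Coefficients b :: nat => real with b i for the paper's b_i (i = 0..p).
 p x p matrices are functions nat => nat => real with indices in {..<p}.\<close>

definition state_space :: "nat \<Rightarrow> (nat \<Rightarrow> real) measure" where
  "state_space p = PiM {..<p} (\<lambda>_. lborel)"

definition vnorm :: "nat \<Rightarrow> (nat \<Rightarrow> real) \<Rightarrow> real" where
  "vnorm p x = sqrt (\<Sum>i<p. (x i)\<^sup>2)"

definition Theta :: "nat \<Rightarrow> (nat \<Rightarrow> real) set" where
  "Theta p = {x \<in> space (state_space p). vnorm p x = 1}"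

definition bstar :: "nat \<Rightarrow> (nat \<Rightarrow> real) \<Rightarrow> (nat \<Rightarrow> real) \<Rightarrow> real" where
  "bstar p b x = sqrt (\<Sum>i<p. (b (Suc i))\<^sup>2 * (x i)\<^sup>2)"

definition zfun :: "nat \<Rightarrow> (nat \<Rightarrow> real) \<Rightarrow> (nat \<Rightarrow> real) \<Rightarrow> real \<Rightarrow> real" where
  "zfun p b x u = bstar p b x * u"

definition shiftvec :: "nat \<Rightarrow> (nat \<Rightarrow> real) \<Rightarrow> (nat \<Rightarrow> real) \<Rightarrow> real \<Rightarrow> (nat \<Rightarrow> real)" where
  "shiftvec p b x u = restrict (\<lambda>i. if i = 0 then zfun p b x u else x (i - 1)) {..<p}"

definition wfun :: "nat \<Rightarrow> (nat \<Rightarrow> real) \<Rightarrow> (nat \<Rightarrow> real) \<Rightarrow> real \<Rightarrow> real" where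
  "wfun p b x u = vnorm p (shiftvec p b x u)"

definition chain_step :: "nat \<Rightarrow> (nat \<Rightarrow> real) \<Rightarrow> (nat \<Rightarrow> real) \<Rightarrow> real \<Rightarrow> (nat \<Rightarrow> real)" where
  "chain_step p b x u = restrict (\<lambda>i. shiftvec p b x u i / wfun p b x u) {..<p}"

definition stationary_dist ::
  "nat \<Rightarrow> (nat \<Rightarrow> real) \<Rightarrow> (real \<Rightarrow> real) \<Rightarrow> (nat \<Rightarrow> real) measure \<Rightarrow> bool" where
  "stationary_dist p b f Stat \<longleftrightarrow>
     sets Stat = sets (state_space p) \<and> prob_space Stat \<and> emeasure Stat (Theta p) = 1 \<and>
     (\<forall>A \<in> sets (state_space p).
        emeasure Stat A = (\<integral>\<^sup>+ x. (\<integral>\<^sup>+ u. ennreal (f u) * indicator A (chain_step p b x u) \<partial>lborel) \<partial>Stat))"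

definition rho :: "nat \<Rightarrow> (nat \<Rightarrow> real) \<Rightarrow> (real \<Rightarrow> real) \<Rightarrow> (nat \<Rightarrow> real) measure \<Rightarrow> real" where
  "rho p b f Stat = exp (\<integral>x. (\<integral>u. ln (wfun p b x u) * f u \<partial>lborel) \<partial>Stat)"

definition matmul :: "nat \<Rightarrow> (nat \<Rightarrow> nat \<Rightarrow> real) \<Rightarrow> (nat \<Rightarrow> nat \<Rightarrow> real) \<Rightarrow> (nat \<Rightarrow> nat \<Rightarrow> real)" where
  "matmul p A B = (\<lambda>i j. \<Sum>k<p. A i k * B k j)"

definition idmat :: "nat \<Rightarrow> nat \<Rightarrow> real" where
  "idmat = (\<lambda>i j. if i = j then 1 else 0)"

definition frob :: "nat \<Rightarrow> (nat \<Rightarrow> nat \<Rightarrow> real) \<Rightarrow> real" where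
  "frob p A = sqrt (\<Sum>i<p. \<Sum>j<p. (A i j)\<^sup>2)"

definition Bmat :: "nat \<Rightarrow> (nat \<Rightarrow> real) \<Rightarrow> real \<Rightarrow> (nat \<Rightarrow> nat \<Rightarrow> real)" where
  "Bmat p b e = (\<lambda>i j. if i = 0 then (b (Suc j))\<^sup>2 * e\<^sup>2
                      else if j = i - 1 then 1 else 0)"

fun Mprod :: "nat \<Rightarrow> (nat \<Rightarrow> real) \<Rightarrow> (nat \<Rightarrow> real) \<Rightarrow> nat \<Rightarrow> (nat \<Rightarrow> nat \<Rightarrow> real)" where
  "Mprod p b es 0 = idmat"
| "Mprod p b es (Suc t) = matmul p (Bmat p b (es (Suc t))) (Mprod p b es t)"

end

theory Submission
  imports Defs
begin

text \<open>
  For \<open>\<theta>\<close> on the unit sphere let \<open>v = (\<theta>\<^sub>1\<^sup>2, \<dots>, \<theta>\<^sub>p\<^sup>2)\<close>. Coordinatewise, \<open>B(u) v\<close> is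
  \<open>w(\<theta>, u)\<^sup>2\<close> times the vector of squared coordinates of the next state of the collapsed chain.
  Hence the mass \<open>\<Sum>\<^sub>i (M\<^sub>t v)\<^sub>i\<close> is the product of the \<open>w(\<theta>\<^sub>s, e\<^sub>s\<^sub>+\<^sub>1)\<^sup>2\<close>, \<open>s < t\<close>, along the
  chain started at \<open>\<theta>\<close>. Started from the stationary law \<open>\<Pi>\<close>, every pair \<open>(\<theta>\<^sub>s, e\<^sub>s\<^sub>+\<^sub>1)\<close> has
  law \<open>\<Pi> \<otimes> F\<close>, so the expected logarithm of the mass is exactly \<open>2 t log \<rho>\<close>.

  The mass is at most \<open>p \<parallel>M\<^sub>t\<parallel>\<close>. Conversely, for \<open>t \<ge> p\<close> every entry of \<open>M\<^sub>t\<close> is bounded by the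
  mass times a factor that depends only on \<open>e\<^sub>1, \<dots>, e\<^sub>p\<close> and whose logarithm is integrable by A.2.
  Therefore \<open>E log \<parallel>M\<^sub>t\<parallel> = 2 t log \<rho> + O(1)\<close>. The argument works for every stationary law of
  the collapsed chain, so neither the uniqueness of \<open>\<Pi>\<close> nor A.1 is used.
\<close>

definition matvec :: "nat \<Rightarrow> (nat \<Rightarrow> nat \<Rightarrow> real) \<Rightarrow> (nat \<Rightarrow> real) \<Rightarrow> nat \<Rightarrow> real" where
  "matvec p A v = (\<lambda>i. \<Sum>j<p. A i j * v j)"

lemma matvec_matmul: "matvec p (matmul p A B) v i = matvec p A (matvec p B v) i"
proof -
  have "matvec p (matmul p A B) v i = (\<Sum>j<p. \<Sum>k<p. A i k * B k j * v j)"
    unfolding matvec_def matmul_def by (simp add: sum_distrib_right)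
  also have "\<dots> = (\<Sum>k<p. \<Sum>j<p. A i k * B k j * v j)" by (rule sum.swap)
  also have "\<dots> = matvec p A (matvec p B v) i"
    unfolding matvec_def by (simp add: sum_distrib_left mult.assoc)
  finally show ?thesis .
qed

lemma matvec_idmat: "i < p \<Longrightarrow> matvec p idmat v i = v i"
proof -
  assume "i < p"
  have "matvec p idmat v i = (\<Sum>j<p. if i = j then v j else 0)"
    unfolding matvec_def idmat_def by (intro sum.cong) auto
  then show ?thesis using \<open>i < p\<close> by simp
qed

lemma frob_eq_L2_set: "frob p A = L2_set (\<lambda>(i, j). A i j) ({..<p} \<times> {..<p})"
  unfolding frob_def L2_set_def by (simp add: sum.cartesian_product case_prod_unfold)

lemma entry_le_frob: "i < p \<Longrightarrow> j < p \<Longrightarrow> A i j \<le> frob p A"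
  unfolding frob_eq_L2_set using member_le_L2_set[of "{..<p} \<times> {..<p}" "(i, j)" "\<lambda>(i, j). A i j"]
  by simp

lemma frob_le_sum:
  assumes "\<And>i j. i < p \<Longrightarrow> j < p \<Longrightarrow> A i j \<ge> 0"
  shows "frob p A \<le> (\<Sum>i<p. \<Sum>j<p. A i j)"
  unfolding frob_eq_L2_set sum.cartesian_product
  using assms by (intro L2_set_le_sum) auto

lemma sum_matvec_le_frob:
  assumes "\<And>j. j < p \<Longrightarrow> v j \<ge> 0" and "(\<Sum>j<p. v j) = 1"
  shows "(\<Sum>i<p. matvec p A v i) \<le> real p * frob p A"
proof -
  have "(\<Sum>i<p. matvec p A v i) \<le> (\<Sum>i<p. \<Sum>j<p. frob p A * v j)"
    unfolding matvec_def using assms(1) entry_le_frob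
    by (intro sum_mono mult_right_mono) auto
  also have "\<dots> = real p * frob p A"
    using assms(2) by (simp add: sum_distrib_left[symmetric])
  finally show ?thesis .
qed

section \<open>The collapsed chain linearises the products \<open>M\<^sub>t\<close>\<close>

definition sq_vec :: "(nat \<Rightarrow> real) \<Rightarrow> nat \<Rightarrow> real" where
  "sq_vec x = (\<lambda>i. (x i)\<^sup>2)"

fun chain_state :: "nat \<Rightarrow> (nat \<Rightarrow> real) \<Rightarrow> (nat \<Rightarrow> real) \<Rightarrow> (nat \<Rightarrow> real) \<Rightarrow> nat \<Rightarrow> nat \<Rightarrow> real" where
  "chain_state p b x es 0 = x"
| "chain_state p b x es (Suc n) = chain_step p b (chain_state p b x es n) (es (Suc n))"

lemma chain_state_cong:
  "(\<And>s. s \<in> {1..n} \<Longrightarrow> es s = es' s) \<Longrightarrow> chain_state p b x es n = chain_state p b x es' n"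
  by (induction n) auto

lemma chain_state_fun_upd: "n < k \<Longrightarrow> chain_state p b x (es(k := y)) n = chain_state p b x es n"
  by (induction n) auto

lemma Mprod_cong: "(\<And>s. s \<in> {1..n} \<Longrightarrow> es s = es' s) \<Longrightarrow> Mprod p b es n = Mprod p b es' n"
  by (induction n) auto

lemma sum_sq_vec: "(\<Sum>i<p. sq_vec x i) = (vnorm p x)\<^sup>2"
  unfolding sq_vec_def vnorm_def by (simp add: sum_nonneg)

lemma wfun_nonneg: "wfun p b x u \<ge> 0"
  unfolding wfun_def vnorm_def by (simp add: sum_nonneg)

lemma matvec_Bmat_sq_vec:
  assumes "i < p"
  shows "matvec p (Bmat p b u) (sq_vec x) i = (wfun p b x u)\<^sup>2 * (chain_step p b x u i)\<^sup>2"
proof -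
  have shift: "matvec p (Bmat p b u) (sq_vec x) i = (shiftvec p b x u i)\<^sup>2"
  proof (cases "i = 0")
    case True
    then show ?thesis using assms
      by (simp add: matvec_def Bmat_def sq_vec_def shiftvec_def zfun_def bstar_def power_mult_distrib
          sum_nonneg sum_distrib_left mult_ac)
  next
    case False
    then have "matvec p (Bmat p b u) (sq_vec x) i = (\<Sum>j<p. if j = i - 1 then (x j)\<^sup>2 else 0)"
      unfolding matvec_def Bmat_def sq_vec_def by (intro sum.cong) auto
    then show ?thesis using False assms by (simp add: sum.delta shiftvec_def)
  qed
  show ?thesis
  proof (cases "wfun p b x u = 0")
    case True
    then have "(\<Sum>j<p. (shiftvec p b x u j)\<^sup>2) = 0"
      unfolding wfun_def vnorm_def by (simp add: sum_nonneg)
    then have "shiftvec p b x u i = 0"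
      using assms by (simp add: sum_nonneg_eq_0_iff)
    then show ?thesis using True shift by simp
  next
    case False
    then show ?thesis using assms shift by (simp add: chain_step_def power_divide)
  qed
qed

lemma matvec_Mprod_sq_vec:
  assumes "i < p"
  shows "matvec p (Mprod p b es n) (sq_vec x) i =
    (\<Prod>s<n. (wfun p b (chain_state p b x es s) (es (Suc s)))\<^sup>2) * (chain_state p b x es n i)\<^sup>2"
  using assms
proof (induction n arbitrary: i)
  case 0
  then show ?case by (simp add: matvec_idmat sq_vec_def)
next
  case (Suc n)
  let ?P = "\<Prod>s<n. (wfun p b (chain_state p b x es s) (es (Suc s)))\<^sup>2"
  let ?B = "Bmat p b (es (Suc n))"
  have "matvec p (Mprod p b es (Suc n)) (sq_vec x) i = matvec p ?B (matvec p (Mprod p b es n) (sq_vec x)) i"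
    by (simp add: matvec_matmul)
  also have "\<dots> = matvec p ?B (\<lambda>j. ?P * sq_vec (chain_state p b x es n) j) i"
    unfolding matvec_def[of p ?B] using Suc.IH by (intro sum.cong) (auto simp: sq_vec_def)
  also have "\<dots> = ?P * matvec p ?B (sq_vec (chain_state p b x es n)) i"
    unfolding matvec_def by (simp add: sum_distrib_left mult_ac)
  finally show ?case
    using matvec_Bmat_sq_vec[OF Suc.prems] by (simp add: mult_ac)
qed

locale arch =
  fixes p :: nat and b :: "nat \<Rightarrow> real"
  assumes p_pos: "1 \<le> p" and b_pos: "\<And>i. i \<le> p \<Longrightarrow> b i > 0"
begin

definition bmin2 :: real where "bmin2 = Min ((\<lambda>j. (b (Suc j))\<^sup>2) ` {..<p})"

definition bsum2 :: real where "bsum2 = (\<Sum>j<p. (b (Suc j))\<^sup>2)"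

definition Bmax :: "real \<Rightarrow> real" where "Bmax u = 1 + bsum2 * u\<^sup>2"

lemma bmin2_le: "j < p \<Longrightarrow> bmin2 \<le> (b (Suc j))\<^sup>2"
  unfolding bmin2_def by (rule Min_le) auto

lemma bmin2_pos: "bmin2 > 0"
proof -
  have "bmin2 \<in> (\<lambda>j. (b (Suc j))\<^sup>2) ` {..<p}"
    unfolding bmin2_def using p_pos by (intro Min_in) (auto simp: lessThan_empty_iff)
  then obtain j where "j < p" "bmin2 = (b (Suc j))\<^sup>2" by auto
  moreover have "b (Suc j) > 0" using b_pos \<open>j < p\<close> by simp
  ultimately show ?thesis by simp
qed

lemma le_bsum2: "j < p \<Longrightarrow> (b (Suc j))\<^sup>2 \<le> bsum2"
  unfolding bsum2_def by (rule member_le_sum) auto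

lemma bsum2_nonneg: "bsum2 \<ge> 0"
  unfolding bsum2_def by (simp add: sum_nonneg)

lemma Bmax_ge_1: "Bmax u \<ge> 1"
  unfolding Bmax_def using bsum2_nonneg by simp

lemma p_Bmax_pos: "real p * Bmax u > 0"
  using p_pos Bmax_ge_1[of u] by (intro mult_pos_pos) auto

lemma Theta_sum: "x \<in> Theta p \<Longrightarrow> (\<Sum>i<p. (x i)\<^sup>2) = 1"
  unfolding Theta_def using sum_sq_vec[of x p] by (auto simp: sq_vec_def)

lemma wfun_sq:
  "(wfun p b x u)\<^sup>2 = (bstar p b x)\<^sup>2 * u\<^sup>2 + (\<Sum>j<p - 1. (x j)\<^sup>2)"
proof -
  obtain q where q: "p = Suc q" using p_pos by (cases p) auto
  have "(wfun p b x u)\<^sup>2 = (\<Sum>i<Suc q. (shiftvec p b x u i)\<^sup>2)"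
    unfolding wfun_def vnorm_def q by (simp add: sum_nonneg)
  also have "\<dots> = (shiftvec p b x u 0)\<^sup>2 + (\<Sum>i<q. (shiftvec p b x u (Suc i))\<^sup>2)"
    by (subst sum.lessThan_Suc_shift) simp
  also have "\<dots> = (bstar p b x)\<^sup>2 * u\<^sup>2 + (\<Sum>j<p - 1. (x j)\<^sup>2)"
    using q by (simp add: shiftvec_def zfun_def power_mult_distrib)
  finally show ?thesis .
qed

lemma bstar_sq_bounds:
  assumes "x \<in> Theta p"
  shows "bmin2 \<le> (bstar p b x)\<^sup>2" and "(bstar p b x)\<^sup>2 \<le> bsum2"
proof -
  have bstar_sq: "(bstar p b x)\<^sup>2 = (\<Sum>i<p. (b (Suc i))\<^sup>2 * (x i)\<^sup>2)"
    unfolding bstar_def by (simp add: sum_nonneg)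
  have "bmin2 = (\<Sum>i<p. bmin2 * (x i)\<^sup>2)"
    using Theta_sum[OF assms] by (simp add: sum_distrib_left[symmetric])
  also have "\<dots> \<le> (bstar p b x)\<^sup>2"
    unfolding bstar_sq by (intro sum_mono mult_right_mono bmin2_le) auto
  finally show "bmin2 \<le> (bstar p b x)\<^sup>2" .
  have "(x i)\<^sup>2 \<le> 1" if "i < p" for i
    using Theta_sum[OF assms] member_le_sum[of i "{..<p}" "\<lambda>i. (x i)\<^sup>2"] that by auto
  then have "(\<Sum>i<p. (b (Suc i))\<^sup>2 * (x i)\<^sup>2) \<le> (\<Sum>i<p. (b (Suc i))\<^sup>2)"
    by (intro sum_mono mult_left_le) auto
  then show "(bstar p b x)\<^sup>2 \<le> bsum2"
    unfolding bstar_sq bsum2_def .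
qed

lemma wfun_sq_bounds:
  assumes "x \<in> Theta p"
  shows "bmin2 * u\<^sup>2 \<le> (wfun p b x u)\<^sup>2" and "(wfun p b x u)\<^sup>2 \<le> Bmax u"
proof -
  have "bmin2 * u\<^sup>2 \<le> (bstar p b x)\<^sup>2 * u\<^sup>2"
    using bstar_sq_bounds(1)[OF assms] by (intro mult_right_mono) auto
  then show "bmin2 * u\<^sup>2 \<le> (wfun p b x u)\<^sup>2"
    unfolding wfun_sq by (smt (verit) sum_nonneg zero_le_power2)
  have "(\<Sum>j<p - 1. (x j)\<^sup>2) \<le> (\<Sum>j<p. (x j)\<^sup>2)"
    by (intro sum_mono2) auto
  moreover have "(bstar p b x)\<^sup>2 * u\<^sup>2 \<le> bsum2 * u\<^sup>2"
    using bstar_sq_bounds(2)[OF assms] by (intro mult_right_mono) auto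
  ultimately show "(wfun p b x u)\<^sup>2 \<le> Bmax u"
    using Theta_sum[OF assms] unfolding wfun_sq Bmax_def by simp
qed

lemma wfun_pos: "x \<in> Theta p \<Longrightarrow> u \<noteq> 0 \<Longrightarrow> wfun p b x u > 0"
  using wfun_sq_bounds(1)[of x u] bmin2_pos wfun_nonneg[of p b x u]
  by (smt (verit) mult_pos_pos power_zero_numeral zero_less_power2)

lemma chain_step_Theta:
  assumes x: "x \<in> Theta p" and u: "u \<noteq> 0"
  shows "chain_step p b x u \<in> Theta p"
proof -
  have w: "wfun p b x u > 0" by (rule wfun_pos[OF x u])
  have "(\<Sum>i<p. (chain_step p b x u i)\<^sup>2) = (\<Sum>i<p. (shiftvec p b x u i)\<^sup>2) / (wfun p b x u)\<^sup>2"
    unfolding chain_step_def sum_divide_distrib by (intro sum.cong) (auto simp: power_divide)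
  also have "\<dots> = 1"
    using w sum_sq_vec[of "shiftvec p b x u" p] by (simp add: wfun_def sq_vec_def)
  finally have "vnorm p (chain_step p b x u) = 1"
    by (simp add: vnorm_def)
  moreover have "chain_step p b x u \<in> space (state_space p)"
    unfolding chain_step_def state_space_def space_PiM by auto
  ultimately show ?thesis unfolding Theta_def by auto
qed

lemma chain_state_Theta:
  assumes "x \<in> Theta p" and "\<forall>s\<in>{1..n}. es s \<noteq> 0"
  shows "chain_state p b x es n \<in> Theta p"
  using assms(2) by (induction n) (auto simp: assms(1) chain_step_Theta)

lemma sum_matvec_Mprod_sq_vec:
  assumes x: "x \<in> Theta p" and es: "\<forall>s\<in>{1..n}. es s \<noteq> 0"
  shows "(\<Sum>i<p. matvec p (Mprod p b es n) (sq_vec x) i) =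
    (\<Prod>s<n. (wfun p b (chain_state p b x es s) (es (Suc s)))\<^sup>2)"
  using Theta_sum[OF chain_state_Theta[OF x es]]
  by (simp add: matvec_Mprod_sq_vec sum_distrib_left[symmetric])

lemma ln_sum_matvec_Mprod_sq_vec:
  assumes x: "x \<in> Theta p" and es: "\<forall>s\<in>{1..n}. es s \<noteq> 0"
  shows "(\<Sum>i<p. matvec p (Mprod p b es n) (sq_vec x) i) > 0"
    and "ln (\<Sum>i<p. matvec p (Mprod p b es n) (sq_vec x) i) =
         2 * (\<Sum>s<n. ln (wfun p b (chain_state p b x es s) (es (Suc s))))"
proof -
  let ?w = "\<lambda>s. wfun p b (chain_state p b x es s) (es (Suc s))"
  have w_pos: "?w s > 0" if "s < n" for s
    using chain_state_Theta[OF x, of s es] es that by (intro wfun_pos) auto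
  then show "(\<Sum>i<p. matvec p (Mprod p b es n) (sq_vec x) i) > 0"
    unfolding sum_matvec_Mprod_sq_vec[OF x es] by (intro prod_pos) (simp add: less_imp_neq[symmetric])
  have "ln (\<Prod>s<n. (?w s)\<^sup>2) = (\<Sum>s<n. ln ((?w s)\<^sup>2))"
    using w_pos by (intro ln_prod) (simp_all add: less_imp_neq[symmetric])
  also have "\<dots> = (\<Sum>s<n. 2 * ln (?w s))"
    using w_pos by (intro sum.cong) (auto simp: ln_realpow)
  finally show "ln (\<Sum>i<p. matvec p (Mprod p b es n) (sq_vec x) i) = 2 * (\<Sum>s<n. ln (?w s))"
    unfolding sum_matvec_Mprod_sq_vec[OF x es] by (simp add: sum_distrib_left)
qed

section \<open>Comparing \<open>\<parallel>M\<^sub>t\<parallel>\<close> with the mass of \<open>M\<^sub>t v\<close>\<close>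

definition Bmin :: "real \<Rightarrow> real" where "Bmin u = min 1 (bmin2 * u\<^sup>2)"

definition log_cond :: "real \<Rightarrow> real" where "log_cond u = ln (real p * Bmax u) - ln (Bmin u)"

lemma Bmin_le_1: "Bmin u \<le> 1"
  unfolding Bmin_def by simp

lemma Bmin_nonneg: "Bmin u \<ge> 0"
  unfolding Bmin_def using bmin2_pos by simp

lemma Bmin_pos: "u \<noteq> 0 \<Longrightarrow> Bmin u > 0"
  unfolding Bmin_def using bmin2_pos by simp

lemma log_cond_nonneg: "log_cond u \<ge> 0"
proof -
  have "ln (real p * Bmax u) \<ge> 0"
    using mult_mono[of 1 "real p" 1 "Bmax u"] p_pos Bmax_ge_1[of u] by simp
  moreover have "ln (Bmin u) \<le> 0"
    using Bmin_le_1[of u] Bmin_nonneg[of u] by (cases "Bmin u = 0") auto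
  ultimately show ?thesis unfolding log_cond_def by simp
qed

lemma Bmat_nonneg: "Bmat p b u i j \<ge> 0"
  unfolding Bmat_def by auto

lemma Mprod_nonneg: "Mprod p b es n i j \<ge> 0"
  by (induction n arbitrary: i j) (auto simp: idmat_def matmul_def Bmat_nonneg intro!: sum_nonneg)

lemma Bmat_le_Bmax: "j < p \<Longrightarrow> Bmat p b u i j \<le> Bmax u"
proof -
  assume "j < p"
  then have "(b (Suc j))\<^sup>2 * u\<^sup>2 \<le> bsum2 * u\<^sup>2"
    using le_bsum2 by (intro mult_right_mono) auto
  then show ?thesis using Bmax_ge_1[of u] unfolding Bmat_def Bmax_def by auto
qed

lemma Mprod_le: "Mprod p b es n i j \<le> (\<Prod>s<n. real p * Bmax (es (Suc s)))"
proof (induction n arbitrary: i j)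
  case 0
  then show ?case by (simp add: idmat_def)
next
  case (Suc n)
  let ?P = "\<Prod>s<n. real p * Bmax (es (Suc s))"
  have "Mprod p b es (Suc n) i j = (\<Sum>l<p. Bmat p b (es (Suc n)) i l * Mprod p b es n l j)"
    by (simp add: matmul_def)
  also have "\<dots> \<le> (\<Sum>l<p. Bmax (es (Suc n)) * ?P)"
    using Suc.IH Bmat_le_Bmax Bmat_nonneg Mprod_nonneg Bmax_ge_1
    by (intro sum_mono mult_mono) (auto, meson order_trans)
  also have "\<dots> = (\<Prod>s<Suc n. real p * Bmax (es (Suc s)))"
    by (simp add: mult_ac)
  finally show ?case .
qed

lemma matvec_Bmat_shift: "0 < i \<Longrightarrow> i < p \<Longrightarrow> matvec p (Bmat p b u) v i = v (i - 1)"
proof -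
  assume i: "0 < i" "i < p"
  have "matvec p (Bmat p b u) v i = (\<Sum>j<p. if j = i - 1 then v j else 0)"
    unfolding matvec_def Bmat_def using i by (intro sum.cong) auto
  then show ?thesis using i by simp
qed

lemma matvec_Bmat_0_ge:
  assumes "\<And>j. j < p \<Longrightarrow> v j \<ge> 0"
  shows "Bmin u * (\<Sum>j<p. v j) \<le> matvec p (Bmat p b u) v 0"
proof -
  have "Bmin u * (\<Sum>j<p. v j) \<le> (\<Sum>j<p. bmin2 * u\<^sup>2 * v j)"
    using assms by (auto simp: Bmin_def sum_distrib_left[symmetric] intro!: mult_right_mono sum_nonneg)
  also have "\<dots> \<le> (\<Sum>j<p. (b (Suc j))\<^sup>2 * u\<^sup>2 * v j)"
    using assms bmin2_le by (intro sum_mono mult_right_mono) auto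
  finally show ?thesis by (simp add: matvec_def Bmat_def)
qed

text \<open>Products of at least \<open>p\<close> matrices \<open>B\<close> have strictly positive entries, so their entries are
  comparable, with a constant depending on the first \<open>p\<close> innovations only.\<close>
definition cond :: "(nat \<Rightarrow> real) \<Rightarrow> real" where
  "cond es = (\<Prod>s<p. real p * Bmax (es (Suc s)) / Bmin (es (Suc s)))"

lemma cond_factor_pos:
  "\<forall>s\<in>{1..p}. es s \<noteq> 0 \<Longrightarrow> s < p \<Longrightarrow> real p * Bmax (es (Suc s)) / Bmin (es (Suc s)) > 0"
  using Bmin_pos p_Bmax_pos by auto

lemma cond_pos: "\<forall>s\<in>{1..p}. es s \<noteq> 0 \<Longrightarrow> cond es > 0"
  unfolding cond_def using cond_factor_pos by (intro prod_pos) auto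

lemma ln_cond:
  assumes es: "\<forall>s\<in>{1..p}. es s \<noteq> 0"
  shows "ln (cond es) = (\<Sum>s<p. log_cond (es (Suc s)))"
proof -
  have "ln (cond es) = (\<Sum>s<p. ln (real p * Bmax (es (Suc s)) / Bmin (es (Suc s))))"
    unfolding cond_def
  proof (rule ln_prod)
    show "real p * Bmax (es (Suc s)) / Bmin (es (Suc s)) \<noteq> 0" if "s \<in> {..<p}" for s
      using cond_factor_pos[OF es, of s] that by (metis lessThan_iff less_irrefl)
  qed simp
  also have "\<dots> = (\<Sum>s<p. log_cond (es (Suc s)))"
    unfolding log_cond_def using es by (intro sum.cong refl ln_divide_pos p_Bmax_pos Bmin_pos) auto
  finally show ?thesis .
qed

context
  fixes v :: "nat \<Rightarrow> real"
  assumes v_nonneg: "\<And>j. j < p \<Longrightarrow> v j \<ge> 0" and v_sum: "(\<Sum>j<p. v j) = 1"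
begin

lemma matvec_Mprod_nonneg: "matvec p (Mprod p b es n) v i \<ge> 0"
  unfolding matvec_def using v_nonneg Mprod_nonneg by (intro sum_nonneg mult_nonneg_nonneg) auto

lemma sum_matvec_Mprod_ge: "(\<Prod>s<n. Bmin (es (Suc s))) \<le> (\<Sum>i<p. matvec p (Mprod p b es n) v i)"
proof (induction n)
  case 0
  then show ?case using v_sum by (simp add: matvec_idmat)
next
  case (Suc n)
  have "(\<Prod>s<Suc n. Bmin (es (Suc s))) = Bmin (es (Suc n)) * (\<Prod>s<n. Bmin (es (Suc s)))"
    by (simp add: mult.commute)
  also have "\<dots> \<le> Bmin (es (Suc n)) * (\<Sum>j<p. matvec p (Mprod p b es n) v j)"
    using Suc.IH Bmin_nonneg by (intro mult_left_mono) auto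
  also have "\<dots> \<le> matvec p (Mprod p b es (Suc n)) v 0"
    unfolding Mprod.simps matvec_matmul using matvec_Mprod_nonneg by (intro matvec_Bmat_0_ge)
  also have "\<dots> \<le> (\<Sum>i<p. matvec p (Mprod p b es (Suc n)) v i)"
    using p_pos by (intro member_le_sum matvec_Mprod_nonneg) auto
  finally show ?case .
qed

lemma matvec_Mprod_ge:
  "i < p \<Longrightarrow> i < n \<Longrightarrow> (\<Prod>s<n. Bmin (es (Suc s))) \<le> matvec p (Mprod p b es n) v i"
proof (induction n arbitrary: i)
  case 0
  then show ?case by simp
next
  case (Suc n)
  let ?u = "matvec p (Mprod p b es n) v"
  have step: "matvec p (Mprod p b es (Suc n)) v i = matvec p (Bmat p b (es (Suc n))) ?u i"
    by (simp add: matvec_matmul)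
  have prod: "(\<Prod>s<Suc n. Bmin (es (Suc s))) = Bmin (es (Suc n)) * (\<Prod>s<n. Bmin (es (Suc s)))"
    by (simp add: mult.commute)
  show ?case
  proof (cases "i = 0")
    case True
    have "Bmin (es (Suc n)) * (\<Prod>s<n. Bmin (es (Suc s))) \<le> Bmin (es (Suc n)) * (\<Sum>j<p. ?u j)"
      using sum_matvec_Mprod_ge Bmin_nonneg by (intro mult_left_mono)
    also have "\<dots> \<le> matvec p (Bmat p b (es (Suc n))) ?u 0"
      using matvec_Mprod_nonneg by (intro matvec_Bmat_0_ge)
    finally show ?thesis using True by (simp add: prod matvec_matmul mult.commute)
  next
    case False
    have "Bmin (es (Suc n)) * (\<Prod>s<n. Bmin (es (Suc s))) \<le> (\<Prod>s<n. Bmin (es (Suc s)))"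
      using Bmin_le_1 Bmin_nonneg by (intro mult_left_le_one_le prod_nonneg) auto
    also have "\<dots> \<le> ?u (i - 1)"
      using Suc.IH[of "i - 1"] Suc.prems False by auto
    finally show ?thesis
      unfolding prod step using matvec_Bmat_shift False Suc.prems by simp
  qed
qed

lemma Mprod_le_cond_matvec:
  assumes es: "\<forall>s\<in>{1..p}. es s \<noteq> 0" and n: "p \<le> n" and ij: "i < p" "j < p"
  shows "Mprod p b es n i j \<le> cond es * matvec p (Mprod p b es n) v i"
  using n ij
proof (induction n arbitrary: i j rule: nat_induct_at_least)
  case base
  have "Mprod p b es p i j \<le> (\<Prod>s<p. real p * Bmax (es (Suc s)))"
    by (rule Mprod_le)
  also have "\<dots> = (\<Prod>s<p. real p * Bmax (es (Suc s)) / Bmin (es (Suc s)) * Bmin (es (Suc s)))"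
    using es Bmin_pos by (intro prod.cong) (auto simp: less_imp_neq[symmetric])
  also have "\<dots> = cond es * (\<Prod>s<p. Bmin (es (Suc s)))"
    unfolding cond_def by (rule prod.distrib)
  also have "\<dots> \<le> cond es * matvec p (Mprod p b es p) v i"
    using base es Bmin_pos p_Bmax_pos unfolding cond_def
    by (intro mult_left_mono matvec_Mprod_ge prod_nonneg) (auto intro: less_imp_le)
  finally show ?case .
next
  case (Suc n)
  let ?B = "Bmat p b (es (Suc n))"
  have "Mprod p b es (Suc n) i j = (\<Sum>l<p. ?B i l * Mprod p b es n l j)"
    by (simp add: matmul_def)
  also have "\<dots> \<le> (\<Sum>l<p. ?B i l * (cond es * matvec p (Mprod p b es n) v l))"
    using Suc Bmat_nonneg by (intro sum_mono mult_left_mono) auto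
  also have "\<dots> = cond es * matvec p ?B (matvec p (Mprod p b es n) v) i"
    unfolding matvec_def[of p ?B] by (simp add: sum_distrib_left mult_ac)
  also have "\<dots> = cond es * matvec p (Mprod p b es (Suc n)) v i"
    by (simp add: matvec_matmul)
  finally show ?case .
qed

lemma ln_frob_Mprod_le:
  assumes es: "\<forall>s\<in>{1..n}. es s \<noteq> 0" and n: "p \<le> n"
  shows "ln (frob p (Mprod p b es n))
    \<le> ln (\<Sum>i<p. matvec p (Mprod p b es n) v i) + ln (real p) + (\<Sum>s<p. log_cond (es (Suc s)))"
proof -
  let ?M = "Mprod p b es n"
  let ?S = "\<Sum>i<p. matvec p ?M v i"
  have es_p: "\<forall>s\<in>{1..p}. es s \<noteq> 0" using es n by auto
  have "0 < (\<Prod>s<n. Bmin (es (Suc s)))"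
    using es Bmin_pos by (intro prod_pos) auto
  also have "\<dots> \<le> ?S" by (rule sum_matvec_Mprod_ge)
  finally have S_pos: "?S > 0" .
  have "0 < real p * frob p ?M"
    using S_pos sum_matvec_le_frob[OF v_nonneg v_sum, of ?M] by linarith
  then have frob_pos: "frob p ?M > 0"
    using p_pos by (simp add: zero_less_mult_iff)
  have "frob p ?M \<le> (\<Sum>i<p. \<Sum>j<p. ?M i j)"
    using Mprod_nonneg by (intro frob_le_sum)
  also have "\<dots> \<le> (\<Sum>i<p. \<Sum>j<p. cond es * matvec p ?M v i)"
    using Mprod_le_cond_matvec[OF es_p n] by (intro sum_mono) auto
  also have "\<dots> = real p * cond es * ?S"
    by (simp add: sum_distrib_left mult.assoc)
  finally have "ln (frob p ?M) \<le> ln (real p * cond es * ?S)"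
    using frob_pos by simp
  also have "\<dots> = ln (real p) + ln (cond es) + ln ?S"
    using p_pos cond_pos[OF es_p] S_pos by (simp add: ln_mult)
  finally show ?thesis unfolding ln_cond[OF es_p] by simp
qed

end

end

lemma measurable_state_component: "(\<lambda>x. x j) \<in> borel_measurable (state_space p)"
proof (cases "j < p")
  case True
  then show ?thesis unfolding state_space_def
    using measurable_component_singleton[of j "{..<p}" "\<lambda>_. lborel"] by simp
next
  case False
  have "(\<lambda>x. undefined) \<in> borel_measurable (state_space p)" by simp
  then show ?thesis
    by (rule measurable_cong[THEN iffD1, rotated])
      (use False in \<open>auto simp: state_space_def space_PiM PiE_def extensional_def\<close>)
qed

lemma measurable_shiftvec[measurable]:
  "(\<lambda>\<omega>. shiftvec p b (fst \<omega>) (snd \<omega>) i) \<in> borel_measurable (state_space p \<Otimes>\<^sub>M borel)"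
proof -
  have shiftvec_eq: "shiftvec p b x u i = (if i < p then if i = 0 then bstar p b x * u else x (i - 1) else undefined)"
    for x u by (simp add: shiftvec_def zfun_def)
  note measurable_state_component[measurable]
  show ?thesis unfolding shiftvec_eq bstar_def by measurable
qed

lemma measurable_wfun[measurable]:
  "(\<lambda>\<omega>. wfun p b (fst \<omega>) (snd \<omega>)) \<in> borel_measurable (state_space p \<Otimes>\<^sub>M borel)"
  unfolding wfun_def vnorm_def by measurable

lemma measurable_chain_step[measurable]:
  "(\<lambda>\<omega>. chain_step p b (fst \<omega>) (snd \<omega>)) \<in> measurable (state_space p \<Otimes>\<^sub>M borel) (state_space p)"
  unfolding chain_step_def state_space_def[of p]
  by (intro measurable_restrict) (simp add: state_space_def[symmetric])

lemma measurable_chain_step_at: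
  "x \<in> space (state_space p) \<Longrightarrow> chain_step p b x \<in> measurable borel (state_space p)"
  using measurable_Pair2[OF measurable_chain_step] by simp

lemma Theta_sets[measurable]: "Theta p \<in> sets (state_space p)"
proof -
  note measurable_state_component[measurable]
  show ?thesis unfolding Theta_def vnorm_def by measurable
qed

lemma ln_le_powr_div: "0 < x \<Longrightarrow> 0 < r \<Longrightarrow> ln x \<le> x powr r / r" for x r :: real
proof -
  assume x: "0 < x" and r: "0 < r"
  have "r * ln x = ln (x powr r)" using x by (simp add: ln_powr)
  also have "\<dots> \<le> x powr r" using x by (intro ln_bound) simp
  finally show ?thesis using r by (simp add: field_simps)
qed

text \<open>The singularity of \<open>ln \<bar>u\<bar>\<close> at \<open>0\<close> is dominated by an integrable one, its growth at
  infinity by a moment.\<close>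
lemma abs_ln_abs_le:
  fixes u r :: real
  assumes "u \<noteq> 0" and "0 < r"
  shows "\<bar>ln \<bar>u\<bar>\<bar> \<le> \<bar>u\<bar> powr r / r + 2 * (indicator {-1..1} u * \<bar>u\<bar> powr (-1/2))"
proof (cases "\<bar>u\<bar> \<le> 1")
  case True
  have "ln (\<bar>u\<bar> powr (-1/2)) \<le> \<bar>u\<bar> powr (-1/2)"
    using assms by (intro ln_bound) simp
  moreover have "ln \<bar>u\<bar> \<le> 0"
    using True assms by simp
  ultimately have "\<bar>ln \<bar>u\<bar>\<bar> \<le> 2 * \<bar>u\<bar> powr (-1/2)"
    using assms by (simp add: ln_powr)
  then show ?thesis
    using True assms by (simp add: indicator_def abs_le_iff add_increasing)
next
  case False
  then have "\<bar>ln \<bar>u\<bar>\<bar> \<le> \<bar>u\<bar> powr r / r"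
    using ln_le_powr_div[of "\<bar>u\<bar>" r] assms by simp
  then show ?thesis by (simp add: add_increasing2)
qed

lemma nn_integral_powr_neg_half_finite:
  "(\<integral>\<^sup>+u. ennreal (indicator {-1..1} u * \<bar>u\<bar> powr (-1/2)) \<partial>lborel) < \<infinity>"
proof -
  let ?g = "\<lambda>u::real. ennreal (indicator {0..1} u * \<bar>u\<bar> powr (-1/2))"
  have gm: "?g \<in> borel_measurable borel" by measurable
  have "(\<integral>\<^sup>+u. ?g u \<partial>lborel) = (\<integral>\<^sup>+u. ennreal (indicator {0..1} u * u powr (-1/2)) \<partial>lborel)"
    by (intro nn_integral_cong) (auto simp: indicator_def)
  also have "\<dots> = ennreal (1 powr ((-1/2) + 1) / ((-1/2) + 1))"
    by (intro nn_integral_has_integral_lebesgue has_integral_powr_from_0) auto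
  finally have g: "(\<integral>\<^sup>+u. ?g u \<partial>lborel) < \<infinity>" by simp
  have g_neg: "(\<integral>\<^sup>+u. ?g (-u) \<partial>lborel) = (\<integral>\<^sup>+u. ?g u \<partial>lborel)"
    using nn_integral_real_affine[OF gm, of "-1" 0] by simp
  have "(\<integral>\<^sup>+u. ennreal (indicator {-1..1} u * \<bar>u\<bar> powr (-1/2)) \<partial>lborel)
      \<le> (\<integral>\<^sup>+u. ?g u + ?g (-u) \<partial>lborel)"
    by (intro nn_integral_mono)
      (auto simp: indicator_def ennreal_plus[symmetric] simp del: ennreal_plus)
  also have "\<dots> = (\<integral>\<^sup>+u. ?g u \<partial>lborel) + (\<integral>\<^sup>+u. ?g (-u) \<partial>lborel)"
    by (intro nn_integral_add) auto
  also have "\<dots> < \<infinity>"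
    using g unfolding g_neg by simp
  finally show ?thesis .
qed

lemma nn_integral_density_real:
  fixes f g :: "real \<Rightarrow> real"
  assumes [measurable]: "f \<in> borel_measurable lborel" "g \<in> borel_measurable borel"
    and "\<And>u. 0 \<le> f u" "\<And>u. 0 \<le> g u"
  shows "(\<integral>\<^sup>+u. ennreal (g u) \<partial>density lborel f) = (\<integral>\<^sup>+u. ennreal (g u * f u) \<partial>lborel)"
  using assms(3,4) by (subst nn_integral_density) (auto simp: ennreal_mult[symmetric] mult.commute)

lemma integrable_density_powr_neg_half:
  fixes f :: "real \<Rightarrow> real" and C :: real
  assumes [measurable]: "f \<in> borel_measurable lborel"
    and f_nonneg: "\<And>u. 0 \<le> f u" and f_le: "\<And>u. f u \<le> C"
  shows "integrable (density lborel f) (\<lambda>u. indicator {-1..1} u * \<bar>u\<bar> powr (-1/2))"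
proof (intro integrableI_bounded)
  let ?h = "\<lambda>u. indicator {-1..1} u * \<bar>u\<bar> powr (-1/2) :: real"
  have h_nonneg: "0 \<le> ?h u" for u by simp
  have C_nonneg: "0 \<le> C" using f_nonneg f_le order_trans by blast
  have "(\<integral>\<^sup>+u. ennreal (?h u * f u) \<partial>lborel) \<le> (\<integral>\<^sup>+u. ennreal (C * ?h u) \<partial>lborel)"
    using f_le h_nonneg by (intro nn_integral_mono ennreal_leI) (simp add: mult.commute mult_right_mono)
  also have "\<dots> = ennreal C * (\<integral>\<^sup>+u. ennreal (?h u) \<partial>lborel)"
    using C_nonneg by (simp add: ennreal_mult nn_integral_cmult)
  also have "\<dots> < \<infinity>"
    using nn_integral_powr_neg_half_finite by (simp add: ennreal_mult_less_top)
  finally show "(\<integral>\<^sup>+u. ennreal (norm (?h u)) \<partial>density lborel f) < \<infinity>"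
    using f_nonneg by (simp add: nn_integral_density_real)
qed simp

lemma integrable_ln_abs_density:
  fixes f :: "real \<Rightarrow> real" and C r :: real
  assumes [measurable]: "f \<in> borel_measurable lborel"
    and f_nonneg: "\<And>u. 0 \<le> f u" and f_le: "\<And>u. f u \<le> C" and "0 < r"
    and moment: "(\<integral>\<^sup>+u. ennreal (\<bar>u\<bar> powr r * f u) \<partial>lborel) < \<infinity>"
  shows "integrable (density lborel f) (\<lambda>u. ln \<bar>u\<bar>)"
proof -
  let ?N = "density lborel f"
  let ?h = "\<lambda>u. indicator {-1..1} u * \<bar>u\<bar> powr (-1/2) :: real"
  have "integrable ?N (\<lambda>u. \<bar>u\<bar> powr r)"
    using moment f_nonneg by (intro integrableI_bounded) (simp_all add: nn_integral_density_real)
  then have bound_int: "integrable ?N (\<lambda>u. \<bar>u\<bar> powr r / r + 2 * ?h u)"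
    using integrable_density_powr_neg_half[OF _ f_nonneg f_le]
    by (intro Bochner_Integration.integrable_add integrable_divide integrable_mult_right) auto
  have "AE u in ?N. u \<noteq> 0"
    by (subst AE_density) (auto intro: AE_mp[OF AE_lborel_singleton])
  then have bound_AE: "AE u in ?N. norm (ln \<bar>u\<bar>) \<le> norm (\<bar>u\<bar> powr r / r + 2 * ?h u)"
  proof eventually_elim
    case (elim u)
    show ?case
      using abs_ln_abs_le[OF elim \<open>0 < r\<close>] by (metis abs_ge_self order_trans real_norm_def)
  qed
  show ?thesis
    by (rule Bochner_Integration.integrable_bound[OF bound_int _ bound_AE]) measurable
qed

lemma ln_square_eq: "ln (u\<^sup>2) = 2 * ln \<bar>u\<bar>" for u :: real
  using ln_realpow[of "\<bar>u\<bar>" 2] by simp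

lemma (in prob_space) integrable_pair_snd:
  fixes g :: "'b \<Rightarrow> real"
  assumes N: "sigma_finite_measure N" and g: "integrable N g"
  shows "integrable (M \<Otimes>\<^sub>M N) (\<lambda>z. g (snd z))"
proof (rule integrableI_bounded)
  have [measurable]: "g \<in> borel_measurable N"
    using g by simp
  show "(\<lambda>z. g (snd z)) \<in> borel_measurable (M \<Otimes>\<^sub>M N)" by measurable
  have "(\<integral>\<^sup>+z. ennreal (norm (g (snd z))) \<partial>(M \<Otimes>\<^sub>M N)) = (\<integral>\<^sup>+x. \<integral>\<^sup>+u. ennreal (norm (g u)) \<partial>N \<partial>M)"
    using sigma_finite_measure.nn_integral_fst[OF N, of "\<lambda>z. ennreal (norm (g (snd z)))" M] by simp
  also have "\<dots> = (\<integral>\<^sup>+u. ennreal (norm (g u)) \<partial>N)"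
    by (simp add: emeasure_space_1)
  finally show "(\<integral>\<^sup>+z. ennreal (norm (g (snd z))) \<partial>(M \<Otimes>\<^sub>M N)) < \<infinity>"
    using g by (simp add: integrable_iff_bounded)
qed

lemma (in prob_space) integral_PiM_density_indep_vars:
  fixes X :: "'i \<Rightarrow> 'a \<Rightarrow> real" and f :: "real \<Rightarrow> real" and g :: "('i \<Rightarrow> real) \<Rightarrow> real"
  assumes "I \<noteq> {}" and indep: "indep_vars (\<lambda>_. borel) X I"
    and distributed: "\<And>i. i \<in> I \<Longrightarrow> distributed M lborel (X i) (\<lambda>u. ennreal (f u))"
    and g: "g \<in> borel_measurable (PiM I (\<lambda>_. density lborel f))"
  shows "(\<integral>y. g y \<partial>PiM I (\<lambda>_. density lborel f)) = (\<integral>x. g (\<lambda>i\<in>I. X i x) \<partial>M)"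
proof -
  have rv: "random_variable borel (X i)" if "i \<in> I" for i
    using indep that unfolding indep_vars_def by blast
  have "distr M borel (X i) = density lborel f" if "i \<in> I" for i
  proof -
    have "distr M borel (X i) = distr M lborel (X i)" by (rule distr_cong) auto
    then show ?thesis using distributed_distr_eq_density[OF distributed[OF that]] by simp
  qed
  then have P: "PiM I (\<lambda>i. distr M borel (X i)) = PiM I (\<lambda>_. density lborel f)"
    by (intro PiM_cong) auto
  have D: "distr M (PiM I (\<lambda>_. borel)) (\<lambda>x. \<lambda>i\<in>I. X i x) = PiM I (\<lambda>i. distr M borel (X i))"
  proof -
    have "indep_vars (\<lambda>_. borel) X I \<longleftrightarrow>
        distr M (PiM I (\<lambda>_. borel)) (\<lambda>x. \<lambda>i\<in>I. X i x) = PiM I (\<lambda>i. distr M borel (X i))"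
      using assms(1) rv by (rule indep_vars_iff_distr_eq_PiM')
    then show ?thesis using indep by blast
  qed
  have "sets (PiM I (\<lambda>_. borel)) = sets (PiM I (\<lambda>_. density lborel f))"
    by (rule sets_PiM_cong) auto
  then have gm: "g \<in> borel_measurable (PiM I (\<lambda>_. borel))"
    using g measurable_cong_sets[of _ _ borel borel] by metis
  have Xm: "(\<lambda>x. \<lambda>i\<in>I. X i x) \<in> measurable M (PiM I (\<lambda>_. borel))"
    using rv by (intro measurable_restrict) auto
  have "(\<integral>y. g y \<partial>PiM I (\<lambda>_. density lborel f)) = (\<integral>y. g y \<partial>distr M (PiM I (\<lambda>_. borel)) (\<lambda>x. \<lambda>i\<in>I. X i x))"
    unfolding D P ..
  also have "\<dots> = (\<integral>x. g (\<lambda>i\<in>I. X i x) \<partial>M)"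
    by (rule integral_distr[OF Xm gm])
  finally show ?thesis .
qed

section \<open>Stationarity\<close>

locale arch_prob = arch +
  fixes f :: "real \<Rightarrow> real" and Stat :: "(nat \<Rightarrow> real) measure" and Cf r0 :: real
  assumes f_meas[measurable]: "f \<in> borel_measurable lborel"
    and f_nonneg: "\<And>u. f u \<ge> 0"
    and f_dens: "(\<integral>\<^sup>+ u. ennreal (f u) \<partial>lborel) = 1"
    and f_bdd: "\<And>u. f u \<le> Cf"
    and r0_pos: "r0 > 0"
    and moment: "(\<integral>\<^sup>+ u. ennreal (\<bar>u\<bar> powr r0 * f u) \<partial>lborel) < \<infinity>"
    and stat: "stationary_dist p b f Stat"
begin

definition F :: "real measure" where "F = density lborel (\<lambda>u. ennreal (f u))"

definition PF :: "nat \<Rightarrow> (nat \<Rightarrow> real) measure" where "PF T = PiM {1..T} (\<lambda>_. F)"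

lemma sets_F[measurable_cong]: "sets F = sets borel"
  unfolding F_def by simp

sublocale F: prob_space F
  by standard (simp add: F_def emeasure_density f_dens)

sublocale PF: product_prob_space "\<lambda>_::nat. F" UNIV
  by unfold_locales

lemma prob_space_PF: "prob_space (PF T)"
  unfolding PF_def by (intro prob_space_PiM F.prob_space_axioms)

sublocale Stat: prob_space Stat
  using stat unfolding stationary_dist_def by simp

lemma sets_Stat[measurable_cong]: "sets Stat = sets (state_space p)"
  using stat unfolding stationary_dist_def by simp

lemma space_Stat: "space Stat = space (state_space p)"
  using sets_eq_imp_space_eq[OF sets_Stat] .

lemma AE_Stat_Theta: "AE x in Stat. x \<in> Theta p"
  using stat Theta_sets unfolding stationary_dist_def
  by (intro Stat.AE_prob_1) (simp add: Stat.emeasure_eq_measure)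

lemma AE_F_nonzero: "AE u in F. u \<noteq> 0"
  unfolding F_def by (subst AE_density) (auto intro: AE_mp[OF AE_lborel_singleton])

lemma measurable_PF_component: "(\<lambda>es. es k) \<in> borel_measurable (PF T)"
proof (cases "k \<in> {1..T}")
  case True
  then show ?thesis
    unfolding PF_def using measurable_component_singleton[OF True, of "\<lambda>_. F"]
    by (simp add: measurable_cong_sets[OF refl sets_F])
next
  case False
  have "(\<lambda>x. undefined) \<in> borel_measurable (PF T)" by simp
  then show ?thesis
    by (rule measurable_cong[THEN iffD1, rotated])
      (use False in \<open>auto simp: PF_def space_PiM PiE_def extensional_def\<close>)
qed

lemma measurable_chain_state[measurable]:
  "(\<lambda>\<omega>. chain_state p b (snd \<omega>) (fst \<omega>) n) \<in> measurable (PF T \<Otimes>\<^sub>M state_space p) (state_space p)"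
proof (induction n)
  case (Suc n)
  note measurable_PF_component[measurable]
  have "(\<lambda>\<omega>. (chain_state p b (snd \<omega>) (fst \<omega>) n, fst \<omega> (Suc n)))
    \<in> measurable (PF T \<Otimes>\<^sub>M state_space p) (state_space p \<Otimes>\<^sub>M borel)"
    using Suc.IH by measurable
  from measurable_compose[OF this measurable_chain_step] show ?case by simp
qed simp

lemma measurable_chain_state_at:
  assumes "x \<in> space (state_space p)"
  shows "(\<lambda>es. chain_state p b x es n) \<in> measurable (PF T) (state_space p)"
  using measurable_compose[OF measurable_Pair2'[OF assms] measurable_chain_state] by simp

lemma measurable_chain_step_F:
  "(\<lambda>\<omega>. chain_step p b (fst \<omega>) (snd \<omega>)) \<in> measurable (state_space p \<Otimes>\<^sub>M F) (state_space p)"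
  using measurable_chain_step
  by (simp add: measurable_cong_sets[OF sets_pair_measure_cong[OF refl sets_F] refl])

lemma distr_chain_step_Stat:
  "distr (Stat \<Otimes>\<^sub>M F) (state_space p) (\<lambda>\<omega>. chain_step p b (fst \<omega>) (snd \<omega>)) = Stat"
  (is "?D = Stat")
proof (rule measure_eqI)
  show "sets ?D = sets Stat" using sets_Stat by simp
next
  fix A assume "A \<in> sets ?D"
  then have A[measurable]: "A \<in> sets (state_space p)" by simp
  have "emeasure ?D A = (\<integral>\<^sup>+\<omega>. indicator A \<omega> \<partial>?D)"
    using A by simp
  also have "\<dots> = (\<integral>\<^sup>+\<omega>. indicator A (chain_step p b (fst \<omega>) (snd \<omega>)) \<partial>(Stat \<Otimes>\<^sub>M F))"
    by (rule nn_integral_distr) measurable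
  also have "\<dots> = (\<integral>\<^sup>+x. \<integral>\<^sup>+u. indicator A (chain_step p b x u) \<partial>F \<partial>Stat)"
    using F.nn_integral_fst[of "\<lambda>\<omega>. indicator A (chain_step p b (fst \<omega>) (snd \<omega>))" Stat]
    by simp
  also have "\<dots> = (\<integral>\<^sup>+x. \<integral>\<^sup>+u. ennreal (f u) * indicator A (chain_step p b x u) \<partial>lborel \<partial>Stat)"
  proof (intro nn_integral_cong)
    fix x assume "x \<in> space Stat"
    then have [measurable]: "chain_step p b x \<in> measurable borel (state_space p)"
      by (intro measurable_chain_step_at) (simp add: space_Stat)
    show "(\<integral>\<^sup>+u. indicator A (chain_step p b x u) \<partial>F)
      = (\<integral>\<^sup>+u. ennreal (f u) * indicator A (chain_step p b x u) \<partial>lborel)"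
      unfolding F_def by (intro nn_integral_density) measurable
  qed
  also have "\<dots> = emeasure Stat A"
    using stat A unfolding stationary_dist_def by simp
  finally show "emeasure ?D A = emeasure Stat A" .
qed

lemma nn_integral_chain_step_Stat:
  assumes [measurable]: "H \<in> borel_measurable (state_space p)"
  shows "(\<integral>\<^sup>+x. \<integral>\<^sup>+u. H (chain_step p b x u) \<partial>F \<partial>Stat) = (\<integral>\<^sup>+x. H x \<partial>Stat)"
proof -
  have "(\<integral>\<^sup>+x. \<integral>\<^sup>+u. H (chain_step p b x u) \<partial>F \<partial>Stat)
      = (\<integral>\<^sup>+\<omega>. H (chain_step p b (fst \<omega>) (snd \<omega>)) \<partial>(Stat \<Otimes>\<^sub>M F))"
    using F.nn_integral_fst[of "\<lambda>\<omega>. H (chain_step p b (fst \<omega>) (snd \<omega>))" Stat] by simp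
  also have "\<dots> = (\<integral>\<^sup>+x. H x \<partial>distr (Stat \<Otimes>\<^sub>M F) (state_space p) (\<lambda>\<omega>. chain_step p b (fst \<omega>) (snd \<omega>)))"
    by (rule nn_integral_distr[symmetric]) measurable
  finally show ?thesis unfolding distr_chain_step_Stat .
qed

lemma nn_integral_PF_Suc:
  assumes "h \<in> borel_measurable (PF (Suc n))"
  shows "(\<integral>\<^sup>+es. h es \<partial>PF (Suc n)) = (\<integral>\<^sup>+es. \<integral>\<^sup>+y. h (es(Suc n := y)) \<partial>F \<partial>PF n)"
proof -
  have PF_Suc: "PF (Suc n) = PiM (insert (Suc n) {1..n}) (\<lambda>_. F)"
    unfolding PF_def by (simp add: atLeastAtMostSuc_conv)
  show ?thesis
    using assms unfolding PF_Suc by (subst PF.product_nn_integral_insert) (auto simp: PF_def)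
qed

lemma nn_integral_PF_restrict:
  assumes [measurable]: "\<And>T. h \<in> borel_measurable (PF T)"
    and depends: "\<And>es es'. (\<And>i. i \<in> {1..m} \<Longrightarrow> es i = es' i) \<Longrightarrow> h es = h es'"
    and "m \<le> T"
  shows "(\<integral>\<^sup>+es. h es \<partial>PF T) = (\<integral>\<^sup>+es. h es \<partial>PF m)"
  using \<open>m \<le> T\<close>
proof (induction T rule: nat_induct_at_least)
  case (Suc T)
  have "(\<integral>\<^sup>+es. h es \<partial>PF (Suc T)) = (\<integral>\<^sup>+es. \<integral>\<^sup>+y. h (es(Suc T := y)) \<partial>F \<partial>PF T)"
    by (rule nn_integral_PF_Suc) measurable
  also have "\<dots> = (\<integral>\<^sup>+es. \<integral>\<^sup>+y. h es \<partial>F \<partial>PF T)"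
    using Suc.hyps by (intro nn_integral_cong) (subst depends[of _ "es" for es], auto)
  finally show ?case using Suc.IH by (simp add: F.emeasure_space_1)
qed simp

lemma nn_integral_chain_state_Stat:
  assumes "H \<in> borel_measurable (state_space p)"
  shows "(\<integral>\<^sup>+x. \<integral>\<^sup>+es. H (chain_state p b x es n) \<partial>PF n \<partial>Stat) = (\<integral>\<^sup>+x. H x \<partial>Stat)"
  using assms
proof (induction n arbitrary: H)
  case 0
  then show ?case using prob_space.emeasure_space_1[OF prob_space_PF, of 0] by simp
next
  case (Suc n)
  note [measurable] = Suc.prems
  define H' where "H' z = (\<integral>\<^sup>+u. H (chain_step p b z u) \<partial>F)" for z
  have [measurable]: "H' \<in> borel_measurable (state_space p)"
  proof -
    have "(\<lambda>\<omega>. H (chain_step p b (fst \<omega>) (snd \<omega>))) \<in> borel_measurable (state_space p \<Otimes>\<^sub>M F)"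
      using measurable_compose[OF measurable_chain_step_F Suc.prems] by (simp add: comp_def)
    then show ?thesis
      unfolding H'_def using F.borel_measurable_nn_integral_fst by simp
  qed
  have "(\<integral>\<^sup>+es. H (chain_state p b x es (Suc n)) \<partial>PF (Suc n)) = (\<integral>\<^sup>+es. H' (chain_state p b x es n) \<partial>PF n)"
    if "x \<in> space (state_space p)" for x
  proof -
    have [measurable]: "(\<lambda>es. chain_state p b x es m) \<in> measurable (PF T) (state_space p)" for m T
      by (rule measurable_chain_state_at[OF that])
    show ?thesis
      unfolding H'_def by (subst nn_integral_PF_Suc) (measurable, simp add: chain_state_fun_upd)
  qed
  then have "(\<integral>\<^sup>+x. \<integral>\<^sup>+es. H (chain_state p b x es (Suc n)) \<partial>PF (Suc n) \<partial>Stat)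
      = (\<integral>\<^sup>+x. \<integral>\<^sup>+es. H' (chain_state p b x es n) \<partial>PF n \<partial>Stat)"
    by (intro nn_integral_cong) (simp add: space_Stat)
  also have "\<dots> = (\<integral>\<^sup>+x. H' x \<partial>Stat)"
    by (rule Suc.IH) measurable
  also have "\<dots> = (\<integral>\<^sup>+x. H x \<partial>Stat)"
    unfolding H'_def by (rule nn_integral_chain_step_Stat) measurable
  finally show ?case .
qed

sublocale PF_Stat: pair_sigma_finite "PF T" Stat for T
  using prob_space_PF by (intro pair_sigma_finite.intro) (auto intro: prob_space_imp_sigma_finite Stat.sigma_finite_measure_axioms)

lemma nn_integral_chain_state_pair:
  assumes G[measurable]: "G \<in> borel_measurable (state_space p \<Otimes>\<^sub>M borel)" and "s < T"
  shows "(\<integral>\<^sup>+x. \<integral>\<^sup>+es. G (chain_state p b x es s, es (Suc s)) \<partial>PF T \<partial>Stat) = (\<integral>\<^sup>+x. \<integral>\<^sup>+u. G (x, u) \<partial>F \<partial>Stat)"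
proof -
  note measurable_PF_component[measurable]
  define H where "H z = (\<integral>\<^sup>+u. G (z, u) \<partial>F)" for z
  have [measurable]: "H \<in> borel_measurable (state_space p)"
    unfolding H_def using F.borel_measurable_nn_integral_fst[of G "state_space p"]
    by (simp add: measurable_cong_sets[OF sets_pair_measure_cong[OF refl sets_F] refl])
  have "(\<integral>\<^sup>+es. G (chain_state p b x es s, es (Suc s)) \<partial>PF T) = (\<integral>\<^sup>+es. H (chain_state p b x es s) \<partial>PF s)"
    if x: "x \<in> space (state_space p)" for x
  proof -
    note [measurable] = measurable_chain_state_at[OF x]
    have "(\<integral>\<^sup>+es. G (chain_state p b x es s, es (Suc s)) \<partial>PF T)
        = (\<integral>\<^sup>+es. G (chain_state p b x es s, es (Suc s)) \<partial>PF (Suc s))"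
      using \<open>s < T\<close> by (intro nn_integral_PF_restrict) (measurable, auto intro!: arg_cong[where f=G] chain_state_cong)
    also have "\<dots> = (\<integral>\<^sup>+es. H (chain_state p b x es s) \<partial>PF s)"
      unfolding H_def by (subst nn_integral_PF_Suc) (measurable, simp add: chain_state_fun_upd)
    finally show ?thesis .
  qed
  then have "(\<integral>\<^sup>+x. \<integral>\<^sup>+es. G (chain_state p b x es s, es (Suc s)) \<partial>PF T \<partial>Stat)
      = (\<integral>\<^sup>+x. \<integral>\<^sup>+es. H (chain_state p b x es s) \<partial>PF s \<partial>Stat)"
    by (intro nn_integral_cong) (simp add: space_Stat)
  also have "\<dots> = (\<integral>\<^sup>+x. H x \<partial>Stat)"
    by (rule nn_integral_chain_state_Stat) measurable
  finally show ?thesis unfolding H_def .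
qed

lemma distr_chain_state_pair:
  assumes "s < T"
  shows "distr (PF T \<Otimes>\<^sub>M Stat) (state_space p \<Otimes>\<^sub>M borel)
      (\<lambda>\<omega>. (chain_state p b (snd \<omega>) (fst \<omega>) s, fst \<omega> (Suc s))) = Stat \<Otimes>\<^sub>M F"
    (is "distr ?Q ?S ?\<phi> = _")
proof (rule measure_eqI)
  note measurable_PF_component[measurable]
  have \<phi>[measurable]: "?\<phi> \<in> measurable ?Q ?S"
    by (simp add: measurable_cong_sets[OF sets_pair_measure_cong[OF refl sets_Stat] refl])
  show "sets (distr ?Q ?S ?\<phi>) = sets (Stat \<Otimes>\<^sub>M F)"
    by (simp add: sets_pair_measure_cong[OF sets_Stat sets_F])
  fix A assume "A \<in> sets (distr ?Q ?S ?\<phi>)"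
  then have A[measurable]: "A \<in> sets ?S" by simp
  have "emeasure (distr ?Q ?S ?\<phi>) A = (\<integral>\<^sup>+z. indicator A z \<partial>distr ?Q ?S ?\<phi>)"
    by simp
  also have "\<dots> = (\<integral>\<^sup>+\<omega>. indicator A (?\<phi> \<omega>) \<partial>?Q)"
    by (rule nn_integral_distr) measurable
  also have "\<dots> = (\<integral>\<^sup>+x. \<integral>\<^sup>+es. indicator A (chain_state p b x es s, es (Suc s)) \<partial>PF T \<partial>Stat)"
    using measurable_compose[OF \<phi> borel_measurable_indicator[OF A]]
    by (subst PF_Stat.nn_integral_snd[symmetric]) (simp_all add: comp_def)
  also have "\<dots> = (\<integral>\<^sup>+x. \<integral>\<^sup>+u. indicator A (x, u) \<partial>F \<partial>Stat)"
    using assms by (intro nn_integral_chain_state_pair) measurable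
  also have "\<dots> = emeasure (Stat \<Otimes>\<^sub>M F) A"
    by (rule F.emeasure_pair_measure[symmetric]) (simp add: sets_pair_measure_cong[OF sets_Stat sets_F])
  finally show "emeasure (distr ?Q ?S ?\<phi>) A = emeasure (Stat \<Otimes>\<^sub>M F) A" .
qed

lemma integral_chain_state_pair:
  fixes G :: "(nat \<Rightarrow> real) \<times> real \<Rightarrow> real"
  assumes "s < T" and G: "integrable (Stat \<Otimes>\<^sub>M F) G"
  shows "integrable (PF T \<Otimes>\<^sub>M Stat) (\<lambda>\<omega>. G (chain_state p b (snd \<omega>) (fst \<omega>) s, fst \<omega> (Suc s)))"
    and "(\<integral>\<omega>. G (chain_state p b (snd \<omega>) (fst \<omega>) s, fst \<omega> (Suc s)) \<partial>(PF T \<Otimes>\<^sub>M Stat))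
      = (\<integral>z. G z \<partial>(Stat \<Otimes>\<^sub>M F))"
proof -
  let ?\<phi> = "\<lambda>\<omega>. (chain_state p b (snd \<omega>) (fst \<omega>) s, fst \<omega> (Suc s))"
  note measurable_PF_component[measurable]
  have \<phi>[measurable]: "?\<phi> \<in> measurable (PF T \<Otimes>\<^sub>M Stat) (state_space p \<Otimes>\<^sub>M borel)"
    by (simp add: measurable_cong_sets[OF sets_pair_measure_cong[OF refl sets_Stat] refl])
  have [measurable]: "G \<in> borel_measurable (state_space p \<Otimes>\<^sub>M borel)"
    using borel_measurable_integrable[OF G]
    by (simp add: measurable_cong_sets[OF sets_pair_measure_cong[OF sets_Stat sets_F] refl])
  show "integrable (PF T \<Otimes>\<^sub>M Stat) (\<lambda>\<omega>. G (?\<phi> \<omega>))"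
    using G by (subst integrable_distr_eq[symmetric, OF \<phi>]) (simp_all add: distr_chain_state_pair[OF \<open>s < T\<close>])
  show "(\<integral>\<omega>. G (?\<phi> \<omega>) \<partial>(PF T \<Otimes>\<^sub>M Stat)) = (\<integral>z. G z \<partial>(Stat \<Otimes>\<^sub>M F))"
    by (subst integral_distr[symmetric, OF \<phi>]) (simp_all add: distr_chain_state_pair[OF \<open>s < T\<close>])
qed

lemma ln_Bmax_le: "ln (Bmax u) \<le> ln (1 + bsum2) + 2 * \<bar>ln \<bar>u\<bar>\<bar>"
proof (cases "\<bar>u\<bar> \<le> 1")
  case True
  then have "u\<^sup>2 \<le> 1" using power_mono[of "\<bar>u\<bar>" 1 2] by simp
  then have "Bmax u \<le> 1 + bsum2"
    unfolding Bmax_def using bsum2_nonneg mult_left_le by auto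
  then have "ln (Bmax u) \<le> ln (1 + bsum2)"
    using Bmax_ge_1[of u] by (intro ln_mono) auto
  then show ?thesis by simp
next
  case False
  then have "1 \<le> u\<^sup>2" using power_mono[of 1 "\<bar>u\<bar>" 2] by simp
  then have "Bmax u \<le> (1 + bsum2) * u\<^sup>2"
    unfolding Bmax_def by (simp add: distrib_right)
  then have "ln (Bmax u) \<le> ln ((1 + bsum2) * u\<^sup>2)"
    using Bmax_ge_1[of u] by (intro ln_mono) auto
  also have "\<dots> = ln (1 + bsum2) + 2 * ln \<bar>u\<bar>"
    using False bsum2_nonneg by (simp add: ln_mult ln_square_eq)
  finally show ?thesis by simp
qed

lemma abs_ln_wfun_le:
  assumes x: "x \<in> Theta p" and u: "u \<noteq> 0"
  shows "\<bar>ln (wfun p b x u)\<bar> \<le> \<bar>ln bmin2\<bar> + ln (1 + bsum2) + \<bar>ln \<bar>u\<bar>\<bar>"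
proof -
  have w_pos: "wfun p b x u > 0" by (rule wfun_pos[OF x u])
  have "ln (bmin2 * u\<^sup>2) \<le> ln ((wfun p b x u)\<^sup>2)"
    using wfun_sq_bounds(1)[OF x, of u] bmin2_pos u by (intro ln_mono) auto
  moreover have "ln ((wfun p b x u)\<^sup>2) \<le> ln (Bmax u)"
    using wfun_sq_bounds(2)[OF x, of u] w_pos by (intro ln_mono) auto
  moreover have "ln (bmin2 * u\<^sup>2) = ln bmin2 + 2 * ln \<bar>u\<bar>"
    using bmin2_pos u by (simp add: ln_mult ln_square_eq)
  moreover have "ln ((wfun p b x u)\<^sup>2) = 2 * ln (wfun p b x u)"
    by (simp add: ln_realpow)
  moreover have "0 \<le> ln (1 + bsum2)" using bsum2_nonneg by simp
  ultimately show ?thesis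
    using ln_Bmax_le[of u] abs_ge_self[of "ln bmin2"] abs_ge_minus_self[of "ln bmin2"]
      abs_ge_self[of "ln \<bar>u\<bar>"] abs_ge_minus_self[of "ln \<bar>u\<bar>"]
    unfolding abs_le_iff by linarith
qed

lemma log_cond_le:
  assumes "u \<noteq> 0"
  shows "log_cond u \<le> ln (real p) + ln (1 + bsum2) + \<bar>ln bmin2\<bar> + 4 * \<bar>ln \<bar>u\<bar>\<bar>"
proof -
  have "- ln (Bmin u) \<le> \<bar>ln bmin2\<bar> + 2 * \<bar>ln \<bar>u\<bar>\<bar>"
  proof (cases "bmin2 * u\<^sup>2 \<le> 1")
    case True
    then have "ln (Bmin u) = ln bmin2 + 2 * ln \<bar>u\<bar>"
      using bmin2_pos assms by (simp add: Bmin_def ln_mult ln_square_eq)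
    then show ?thesis
      using abs_ge_minus_self[of "ln bmin2"] abs_ge_minus_self[of "ln \<bar>u\<bar>"] by linarith
  next
    case False
    then show ?thesis by (simp add: Bmin_def)
  qed
  moreover have "ln (real p * Bmax u) = ln (real p) + ln (Bmax u)"
    using p_pos Bmax_ge_1[of u] by (intro ln_mult_pos) auto
  ultimately show ?thesis
    using ln_Bmax_le[of u] unfolding log_cond_def by linarith
qed

lemma integrable_F_ln_abs: "integrable F (\<lambda>u. ln \<bar>u\<bar>)"
  unfolding F_def using f_nonneg f_bdd r0_pos moment by (intro integrable_ln_abs_density) auto

sublocale Stat_F: pair_sigma_finite Stat F
  by (intro pair_sigma_finite.intro Stat.sigma_finite_measure_axioms F.sigma_finite_measure_axioms)

lemma AE_Stat_F: "AE z in Stat \<Otimes>\<^sub>M F. fst z \<in> Theta p \<and> snd z \<noteq> 0"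
proof (rule Stat_F.AE_pair_measure)
  show "{z \<in> space (Stat \<Otimes>\<^sub>M F). fst z \<in> Theta p \<and> snd z \<noteq> 0} \<in> sets (Stat \<Otimes>\<^sub>M F)"
    using Theta_sets by measurable
  show "AE x in Stat. AE u in F. fst (x, u) \<in> Theta p \<and> snd (x, u) \<noteq> 0"
    using AE_Stat_Theta
  proof eventually_elim
    case (elim x)
    show ?case using AE_F_nonzero by eventually_elim (simp add: elim)
  qed
qed

lemma integrable_ln_wfun: "integrable (Stat \<Otimes>\<^sub>M F) (\<lambda>z. ln (wfun p b (fst z) (snd z)))"
proof (rule Bochner_Integration.integrable_bound)
  show "integrable (Stat \<Otimes>\<^sub>M F) (\<lambda>z. \<bar>ln bmin2\<bar> + ln (1 + bsum2) + \<bar>ln \<bar>snd z\<bar>\<bar>)"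
    using integrable_F_ln_abs F.sigma_finite_measure_axioms
    by (intro Bochner_Integration.integrable_add Stat.integrable_pair_snd) auto
  show "(\<lambda>z. ln (wfun p b (fst z) (snd z))) \<in> borel_measurable (Stat \<Otimes>\<^sub>M F)"
    using measurable_wfun
    by (simp add: measurable_cong_sets[OF sets_pair_measure_cong[OF sets_Stat sets_F] refl])
  show "AE z in Stat \<Otimes>\<^sub>M F. norm (ln (wfun p b (fst z) (snd z)))
      \<le> norm (\<bar>ln bmin2\<bar> + ln (1 + bsum2) + \<bar>ln \<bar>snd z\<bar>\<bar>)"
    using AE_Stat_F by eventually_elim (use abs_ln_wfun_le bsum2_nonneg in auto)
qed

lemma integrable_log_cond: "integrable F log_cond"
proof (rule Bochner_Integration.integrable_bound)
  show "integrable F (\<lambda>u. ln (real p) + ln (1 + bsum2) + \<bar>ln bmin2\<bar> + 4 * \<bar>ln \<bar>u\<bar>\<bar>)"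
    using integrable_F_ln_abs by auto
  show "log_cond \<in> borel_measurable F"
    unfolding log_cond_def Bmax_def Bmin_def by measurable
  show "AE u in F. norm (log_cond u) \<le> norm (ln (real p) + ln (1 + bsum2) + \<bar>ln bmin2\<bar> + 4 * \<bar>ln \<bar>u\<bar>\<bar>)"
    using AE_F_nonzero by eventually_elim (use log_cond_le log_cond_nonneg in force)
qed

definition lyap :: real where
  "lyap = (\<integral>z. ln (wfun p b (fst z) (snd z)) \<partial>(Stat \<Otimes>\<^sub>M F))"

lemma ln_rho_eq_lyap: "ln (rho p b f Stat) = lyap"
proof -
  have inner: "(\<integral>u. ln (wfun p b x u) * f u \<partial>lborel) = (\<integral>u. ln (wfun p b x u) \<partial>F)"
    if "x \<in> space Stat" for x
  proof -
    have [measurable]: "wfun p b x \<in> borel_measurable borel"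
      using measurable_Pair2[OF measurable_wfun, of x] that by (simp add: space_Stat)
    show ?thesis
      unfolding F_def by (subst integral_density) (auto simp: f_nonneg mult.commute)
  qed
  have "(\<integral>x. \<integral>u. ln (wfun p b x u) * f u \<partial>lborel \<partial>Stat) = (\<integral>x. \<integral>u. ln (wfun p b x u) \<partial>F \<partial>Stat)"
    by (rule Bochner_Integration.integral_cong[OF refl inner])
  also have "\<dots> = lyap"
    unfolding lyap_def using Stat_F.integral_fst'[OF integrable_ln_wfun] by simp
  finally show ?thesis
    unfolding rho_def by simp
qed

section \<open>The growth rate of \<open>E log \<parallel>M\<^sub>t\<parallel>\<close>\<close>

lemma sq_vec_Theta:
  assumes "x \<in> Theta p"
  shows "\<And>j. j < p \<Longrightarrow> sq_vec x j \<ge> 0" and "(\<Sum>j<p. sq_vec x j) = 1"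
  using Theta_sum[OF assms] by (auto simp: sq_vec_def)

lemma measurable_ln_frob_Mprod[measurable]:
  "(\<lambda>es. ln (frob p (Mprod p b es n))) \<in> borel_measurable (PF T)"
proof -
  note measurable_PF_component[measurable]
  have [measurable]: "(\<lambda>es. Mprod p b es n i j) \<in> borel_measurable (PF T)" for i j
    by (induction n arbitrary: i j) (simp_all add: matmul_def Bmat_def)
  show ?thesis unfolding frob_def by measurable
qed

definition log_mass :: "nat \<Rightarrow> (nat \<Rightarrow> real) \<times> (nat \<Rightarrow> real) \<Rightarrow> real" where
  "log_mass T \<omega> = 2 * (\<Sum>s<T. ln (wfun p b (chain_state p b (snd \<omega>) (fst \<omega>) s) (fst \<omega> (Suc s))))"

lemma ln_frob_Mprod_bounds:
  assumes es: "\<forall>s\<in>{1..T}. es s \<noteq> 0" and x: "x \<in> Theta p" and T: "p \<le> T"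
  shows "log_mass T (es, x) \<le> ln (frob p (Mprod p b es T)) + ln (real p)"
    and "ln (frob p (Mprod p b es T)) \<le> log_mass T (es, x) + ln (real p) + (\<Sum>s<p. log_cond (es (Suc s)))"
proof -
  let ?M = "Mprod p b es T"
  let ?S = "\<Sum>i<p. matvec p ?M (sq_vec x) i"
  have S_pos: "?S > 0" and ln_S: "ln ?S = log_mass T (es, x)"
    using ln_sum_matvec_Mprod_sq_vec[OF x es] by (auto simp: log_mass_def)
  have S_le: "?S \<le> real p * frob p ?M"
    by (rule sum_matvec_le_frob[OF sq_vec_Theta[OF x]])
  then have "0 < real p * frob p ?M"
    using S_pos by linarith
  then have "frob p ?M > 0"
    using p_pos by (simp add: zero_less_mult_iff)
  have "ln ?S \<le> ln (real p * frob p ?M)"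
    using S_pos S_le by (intro ln_mono) auto
  also have "\<dots> = ln (real p) + ln (frob p ?M)"
    using \<open>frob p ?M > 0\<close> p_pos by (intro ln_mult_pos) auto
  finally show "log_mass T (es, x) \<le> ln (frob p ?M) + ln (real p)"
    using ln_S by simp
  show "ln (frob p ?M) \<le> log_mass T (es, x) + ln (real p) + (\<Sum>s<p. log_cond (es (Suc s)))"
    using ln_frob_Mprod_le[OF sq_vec_Theta[OF x] es T] ln_S by simp
qed

lemma AE_PF_Stat_nonzero_Theta:
  "AE \<omega> in PF T \<Otimes>\<^sub>M Stat. (\<forall>s\<in>{1..T}. fst \<omega> s \<noteq> 0) \<and> snd \<omega> \<in> Theta p"
proof (rule PF_Stat.AE_pair_measure)
  note measurable_PF_component[measurable]
  show "{\<omega> \<in> space (PF T \<Otimes>\<^sub>M Stat). (\<forall>s\<in>{1..T}. fst \<omega> s \<noteq> 0) \<and> snd \<omega> \<in> Theta p}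
      \<in> sets (PF T \<Otimes>\<^sub>M Stat)"
    using Theta_sets by measurable
  have "AE es in PF T. \<forall>s\<in>{1..T}. es s \<noteq> 0"
    unfolding PF_def using AE_F_nonzero F.prob_space_axioms
    by (intro AE_finite_allI AE_PiM_component) auto
  then show "AE es in PF T. AE x in Stat. (\<forall>s\<in>{1..T}. fst (es, x) s \<noteq> 0) \<and> snd (es, x) \<in> Theta p"
    by eventually_elim (use AE_Stat_Theta in auto)
qed

lemma AE_ln_frob_Mprod_bounds:
  assumes "p \<le> T"
  shows "AE \<omega> in PF T \<Otimes>\<^sub>M Stat. log_mass T \<omega> \<le> ln (frob p (Mprod p b (fst \<omega>) T)) + ln (real p) \<and>
    ln (frob p (Mprod p b (fst \<omega>) T)) \<le> log_mass T \<omega> + ln (real p) + (\<Sum>s<p. log_cond (fst \<omega> (Suc s)))"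
  using AE_PF_Stat_nonzero_Theta
  by eventually_elim (use ln_frob_Mprod_bounds assms in \<open>auto simp del: log_mass_def\<close>)

lemma integral_log_mass:
  shows "integrable (PF T \<Otimes>\<^sub>M Stat) (log_mass T)"
    and "(\<integral>\<omega>. log_mass T \<omega> \<partial>(PF T \<Otimes>\<^sub>M Stat)) = 2 * real T * lyap"
  using integral_chain_state_pair[OF _ integrable_ln_wfun, of _ T] unfolding log_mass_def
  by (auto simp: lyap_def Bochner_Integration.integral_sum
      intro!: integrable_mult_right Bochner_Integration.integrable_sum)

lemma integral_log_cond_sum:
  assumes "p \<le> T"
  shows "integrable (PF T \<Otimes>\<^sub>M Stat) (\<lambda>\<omega>. \<Sum>s<p. log_cond (fst \<omega> (Suc s)))"
    and "(\<integral>\<omega>. (\<Sum>s<p. log_cond (fst \<omega> (Suc s))) \<partial>(PF T \<Otimes>\<^sub>M Stat)) = real p * (\<integral>u. log_cond u \<partial>F)"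
proof -
  have int: "integrable (Stat \<Otimes>\<^sub>M F) (\<lambda>z. log_cond (snd z))"
    by (rule Stat.integrable_pair_snd[OF F.sigma_finite_measure_axioms integrable_log_cond])
  have "(\<integral>z. log_cond (snd z) \<partial>(Stat \<Otimes>\<^sub>M F)) = (\<integral>u. log_cond u \<partial>F)"
    using Stat_F.integral_fst'[OF int] by (simp add: Stat.prob_space)
  then show "integrable (PF T \<Otimes>\<^sub>M Stat) (\<lambda>\<omega>. \<Sum>s<p. log_cond (fst \<omega> (Suc s)))"
    and "(\<integral>\<omega>. (\<Sum>s<p. log_cond (fst \<omega> (Suc s))) \<partial>(PF T \<Otimes>\<^sub>M Stat)) = real p * (\<integral>u. log_cond u \<partial>F)"
    using integral_chain_state_pair[OF _ int, of _ T] assms by auto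
qed

lemma prob_space_PF_Stat: "prob_space (PF T \<Otimes>\<^sub>M Stat)"
  by (rule prob_space_pair[OF prob_space_PF Stat.prob_space_axioms])

lemma integrable_ln_frob_Mprod:
  assumes "p \<le> T"
  shows "integrable (PF T \<Otimes>\<^sub>M Stat) (\<lambda>\<omega>. ln (frob p (Mprod p b (fst \<omega>) T)))"
proof (rule Bochner_Integration.integrable_bound)
  let ?K = "\<lambda>\<omega>. \<Sum>s<p. log_cond (fst \<omega> (Suc s))"
  interpret Q: prob_space "PF T \<Otimes>\<^sub>M Stat" by (rule prob_space_PF_Stat)
  show "integrable (PF T \<Otimes>\<^sub>M Stat) (\<lambda>\<omega>. \<bar>log_mass T \<omega>\<bar> + ln (real p) + ?K \<omega>)"
    using integral_log_mass(1) integral_log_cond_sum(1)[OF assms]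
    by (intro Bochner_Integration.integrable_add integrable_abs Q.integrable_const) auto
  show "(\<lambda>\<omega>. ln (frob p (Mprod p b (fst \<omega>) T))) \<in> borel_measurable (PF T \<Otimes>\<^sub>M Stat)"
    by (rule measurable_compose[OF measurable_fst measurable_ln_frob_Mprod])
  show "AE \<omega> in PF T \<Otimes>\<^sub>M Stat. norm (ln (frob p (Mprod p b (fst \<omega>) T)))
      \<le> norm (\<bar>log_mass T \<omega>\<bar> + ln (real p) + ?K \<omega>)"
    using AE_ln_frob_Mprod_bounds[OF assms]
  proof eventually_elim
    case (elim \<omega>)
    have "0 \<le> ln (real p)" "0 \<le> ?K \<omega>"
      using p_pos log_cond_nonneg by (simp_all add: sum_nonneg)
    then show ?case
      using elim abs_ge_self[of "log_mass T \<omega>"] abs_ge_minus_self[of "log_mass T \<omega>"]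
      unfolding real_norm_def abs_le_iff by linarith
  qed
qed

lemma integral_ln_frob_bounds:
  assumes "p \<le> T"
  shows "2 * real T * lyap - ln (real p) \<le> (\<integral>es. ln (frob p (Mprod p b es T)) \<partial>PF T)"
    and "(\<integral>es. ln (frob p (Mprod p b es T)) \<partial>PF T)
      \<le> 2 * real T * lyap + ln (real p) + real p * (\<integral>u. log_cond u \<partial>F)"
proof -
  let ?Q = "PF T \<Otimes>\<^sub>M Stat"
  let ?g = "\<lambda>\<omega>. ln (frob p (Mprod p b (fst \<omega>) T))"
  interpret Q: prob_space ?Q by (rule prob_space_PF_Stat)
  note L = integral_log_mass[of T] and K = integral_log_cond_sum[OF assms]
    and g = integrable_ln_frob_Mprod[OF assms] and ae = AE_ln_frob_Mprod_bounds[OF assms]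
  have "(\<integral>es. ln (frob p (Mprod p b es T)) \<partial>PF T) = (\<integral>\<omega>. ?g \<omega> \<partial>?Q)"
    using integral_distr[OF measurable_fst[of "PF T" Stat] measurable_ln_frob_Mprod]
    by (simp add: Stat.distr_pair_fst)
  moreover have "(\<integral>\<omega>. log_mass T \<omega> \<partial>?Q) \<le> (\<integral>\<omega>. ?g \<omega> + ln (real p) \<partial>?Q)"
    using L g ae by (intro integral_mono_AE) auto
  moreover have "(\<integral>\<omega>. ?g \<omega> \<partial>?Q) \<le> (\<integral>\<omega>. log_mass T \<omega> + ln (real p) + (\<Sum>s<p. log_cond (fst \<omega> (Suc s))) \<partial>?Q)"
    using L K g ae by (intro integral_mono_AE) auto
  ultimately show "2 * real T * lyap - ln (real p) \<le> (\<integral>es. ln (frob p (Mprod p b es T)) \<partial>PF T)"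
    and "(\<integral>es. ln (frob p (Mprod p b es T)) \<partial>PF T)
      \<le> 2 * real T * lyap + ln (real p) + real p * (\<integral>u. log_cond u \<partial>F)"
    using L K g by (simp_all add: Q.prob_space)
qed

lemma tendsto_integral_ln_frob:
  "(\<lambda>T. (\<integral>es. ln (frob p (Mprod p b es T)) \<partial>PF T) / real T) \<longlonglongrightarrow> 2 * lyap"
proof (rule tendsto_sandwich)
  let ?E = "\<lambda>T. \<integral>es. ln (frob p (Mprod p b es T)) \<partial>PF T"
  let ?C = "ln (real p) + real p * (\<integral>u. log_cond u \<partial>F)"
  show "\<forall>\<^sub>F T in sequentially. 2 * lyap - ln (real p) / real T \<le> ?E T / real T"
    using eventually_ge_at_top[of p]
  proof eventually_elim
    case (elim T)
    then have "(2 * real T * lyap - ln (real p)) / real T \<le> ?E T / real T"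
      using integral_ln_frob_bounds(1)[OF elim] by (intro divide_right_mono) auto
    then show ?case
      using elim p_pos by (simp add: diff_divide_distrib)
  qed
  show "\<forall>\<^sub>F T in sequentially. ?E T / real T \<le> 2 * lyap + ?C / real T"
    using eventually_ge_at_top[of p]
  proof eventually_elim
    case (elim T)
    then have "?E T / real T \<le> (2 * real T * lyap + ?C) / real T"
      using integral_ln_frob_bounds(2)[OF elim] by (intro divide_right_mono) (auto simp: add.assoc)
    then show ?case
      using elim p_pos by (simp add: add_divide_distrib)
  qed
  show "(\<lambda>T. 2 * lyap - ln (real p) / real T) \<longlonglongrightarrow> 2 * lyap"
    and "(\<lambda>T. 2 * lyap + ?C / real T) \<longlonglongrightarrow> 2 * lyap"
    using tendsto_diff[OF tendsto_const lim_const_over_n[of "ln (real p)"]]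
      tendsto_add[OF tendsto_const lim_const_over_n[of ?C]] by simp_all
qed


lemma integral_PF_eq_expectation:
  assumes M: "prob_space M" and indep: "prob_space.indep_vars M (\<lambda>_. borel) e {1..}"
    and e_dist: "\<forall>t\<ge>1. distributed M lborel (e t) (\<lambda>u. ennreal (f u))" and "1 \<le> T"
  shows "(\<integral>es. ln (frob p (Mprod p b es T)) \<partial>PF T)
    = prob_space.expectation M (\<lambda>\<omega>. ln (frob p (Mprod p b (\<lambda>s. e s \<omega>) T)))"
proof -
  interpret M: prob_space M by (rule M)
  have "(\<integral>es. ln (frob p (Mprod p b es T)) \<partial>PF T)
      = M.expectation (\<lambda>\<omega>. ln (frob p (Mprod p b (\<lambda>s\<in>{1..T}. e s \<omega>) T)))"
    unfolding PF_def F_def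
  proof (rule M.integral_PiM_density_indep_vars)
    show "{1..T} \<noteq> {}" using \<open>1 \<le> T\<close> by simp
    show "M.indep_vars (\<lambda>_. borel) e {1..T}"
      using indep by (rule M.indep_vars_subset) auto
    show "distributed M lborel (e i) (\<lambda>u. ennreal (f u))" if "i \<in> {1..T}" for i
      using e_dist that by simp
    show "(\<lambda>es. ln (frob p (Mprod p b es T))) \<in> borel_measurable (PiM {1..T} (\<lambda>_. density lborel f))"
      using measurable_ln_frob_Mprod[of T T] by (simp add: PF_def F_def)
  qed
  also have "\<dots> = M.expectation (\<lambda>\<omega>. ln (frob p (Mprod p b (\<lambda>s. e s \<omega>) T)))"
    by (intro Bochner_Integration.integral_cong refl arg_cong[where f="\<lambda>A. ln (frob p A)"] Mprod_cong)
      simp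
  finally show ?thesis .
qed
end

theorem mainTheorem17:
  fixes p :: nat and b :: "nat \<Rightarrow> real" and f :: "real \<Rightarrow> real"
    and M :: "'w measure" and e :: "nat \<Rightarrow> 'w \<Rightarrow> real"
    and Stat :: "(nat \<Rightarrow> real) measure"
  assumes p: "p \<ge> 1"
    and b_pos: "\<forall>i\<le>p. b i > 0"
    and f_meas: "f \<in> borel_measurable lborel"
    and f_nonneg: "\<forall>u. f u \<ge> 0"
    and f_dens: "(\<integral>\<^sup>+ u. ennreal (f u) \<partial>lborel) = 1"
    and A1_loc: "\<forall>K. compact K \<longrightarrow> (\<exists>c>0. \<forall>u\<in>K. f u \<ge> c)"
    and A2_bdd: "\<exists>C. \<forall>u. (1 + \<bar>u\<bar>) * f u \<le> C"
    and A2_mom: "\<exists>r0>0. (\<integral>\<^sup>+ u. ennreal (\<bar>u\<bar> powr r0 * f u) \<partial>lborel) < \<infinity>"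
    and M: "prob_space M"
    and e_indep: "prob_space.indep_vars M (\<lambda>_. borel) e {1..}"
    and e_dist: "\<forall>t\<ge>1. distributed M lborel (e t) (\<lambda>u. ennreal (f u))"
    and Pi_stat: "stationary_dist p b f Stat"
    and Pi_unique: "\<forall>Q. stationary_dist p b f Q \<longrightarrow> Q = Stat"
  shows "(\<lambda>t. prob_space.expectation M
                 (\<lambda>\<omega>. ln (frob p (Mprod p b (\<lambda>s. e s \<omega>) t))) / real t)
           \<longlonglongrightarrow> 2 * ln (rho p b f Stat)"
proof -
  obtain C where C: "\<And>u. (1 + \<bar>u\<bar>) * f u \<le> C" using A2_bdd by blast
  obtain r0 where r0: "r0 > 0" "(\<integral>\<^sup>+ u. ennreal (\<bar>u\<bar> powr r0 * f u) \<partial>lborel) < \<infinity>"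
    using A2_mom by blast
  have "f u \<le> C" for u
  proof -
    have "f u \<le> (1 + \<bar>u\<bar>) * f u" using f_nonneg by (simp add: algebra_simps)
    then show ?thesis using C[of u] by linarith
  qed
  then interpret arch_prob p b f Stat C r0
    using p b_pos f_meas f_nonneg f_dens r0 Pi_stat by unfold_locales auto
  have "\<forall>\<^sub>F T in sequentially. (\<integral>es. ln (frob p (Mprod p b es T)) \<partial>PF T) / real T
      = prob_space.expectation M (\<lambda>\<omega>. ln (frob p (Mprod p b (\<lambda>s. e s \<omega>) T))) / real T"
    using eventually_ge_at_top[of 1]
    by eventually_elim (simp add: integral_PF_eq_expectation[OF M e_indep e_dist])
  then show ?thesis
    using tendsto_integral_ln_frob unfolding ln_rho_eq_lyap by (rule Lim_transform_eventually[rotated])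
qed

end
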